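(* Let $G=(V,E,w)$ be an $n$-vertex directed graph with real edge weights, let $h>0$ be an integer and $\tau\ge 2n^2$ an integer, and run the procedure $\textsc{DetPreprocessing}(G,\tau,h)$ described below. At termination: (1) $\textsc{Congestion}(v)\le\tau$ for every $v\in V$; (2) $\sum_{v\in V}\textsc{Congestion}(v)=O(n^3\log h)$; (3) $|C|=O(n^3\log h/\tau)$; (4) each computed path $\pi^i_{s,t}$ is an $h_i$-hop-improving shortest path in $G$ with regard to $G\setminus C$, where $C$ is the final set.
   Context: Let $i_h=\lceil \log_{3/2} h\rceil$ and $h_i=(3/2)^i$ for $i=0,\dots,i_h$. A path is $h'$-hop-restricted if it has at most $h'$ edges; $\mathbf{dist}^{h'}_H(s,t)$ denotes the minimum weight of an $h'$-hop-restricted $s$-to-$t$ path in $H$. For $C\subseteq V$, $G\setminus C$ denotes the induced subgraph $G[V\setminus C]$. A path $\pi_{s,t}$ from $s$ to $t$ is an $h'$-hop-improving shortest path in $G$ with regard to $H\subseteq G$ if it is a path in $G$ whose weight is at most $\mathbf{dist}^{h'}_H(s,t)$. The procedure $\textsc{DetPreprocessing}(G,\tau,h)$: initialize $C\gets\emptyset$, $\textsc{Congestion}(v)\gets 0$ for all $v\in V$, and $\pi^i_{s,t}\gets\bot$ (the empty path of weight $\infty$) for all $s,t,i$. Then process every vertex $s\in V$ exactly once as a root, in an arbitrary order; for each root $s$ and each $i\in[0,i_h]$ in turn: (1) compute, by Bellman-Ford from $s$ in $G[V\setminus C]$, paths $\pi^i_{s,t}$ for all $t\in V$ that are shortest among $h_i$-hop-restricted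 $s$-to-$t$ paths in $G[V\setminus C]$; (2) for every $t\in V$ and every vertex $u$ on $\pi^i_{s,t}$, increase $\textsc{Congestion}(u)$ by $\lceil n/h_i\rceil$; (3) set $C\gets\{v\in V:\textsc{Congestion}(v)>\tau/2\}$. *)

theory Defs
  imports Complex_Main "HOL-Library.Extended_Real"
begin

definition is_walk :: "(nat \<times> nat) set \<Rightarrow> nat set \<Rightarrow> nat list \<Rightarrow> nat \<Rightarrow> nat \<Rightarrow> bool" where
  "is_walk E U p s t \<longleftrightarrow> p \<noteq> [] \<and> hd p = s \<and> last p = t \<and> set p \<subseteq> U \<and>
     (\<forall>j < length p - 1. (p ! j, p ! Suc j) \<in> E)"

definition hops :: "nat list \<Rightarrow> nat" where
  "hops p = length p - 1"

definition walk_weight :: "(nat \<times> nat \<Rightarrow> real) \<Rightarrow> nat list \<Rightarrow> real" where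
  "walk_weight w p = (\<Sum>j < length p - 1. w (p ! j, p ! Suc j))"

text \<open>dist^{h'}_{G[U]}(s,t): minimum weight of an h'-hop-restricted s-t path in the
  induced subgraph G[U]; \<infinity> if there is none.\<close>
definition hop_dist :: "(nat \<times> nat) set \<Rightarrow> (nat \<times> nat \<Rightarrow> real) \<Rightarrow> nat set \<Rightarrow> real \<Rightarrow> nat \<Rightarrow> nat \<Rightarrow> ereal" where
  "hop_dist E w U hb s t =
     (INF p \<in> {p. is_walk E U p s t \<and> real (hops p) \<le> hb}. ereal (walk_weight w p))"

text \<open>Weight of a possibly-empty path; None is \<bottom>, the empty path of weight \<infinity>.\<close>
definition opt_weight :: "(nat \<times> nat \<Rightarrow> real) \<Rightarrow> nat list option \<Rightarrow> ereal" where
  "opt_weight w po = (case po of None \<Rightarrow> \<infinity> | Some p \<Rightarrow> ereal (walk_weight w p))"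

definition opt_vertices :: "nat list option \<Rightarrow> nat set" where
  "opt_vertices po = (case po of None \<Rightarrow> {} | Some p \<Rightarrow> set p)"

definition i_h :: "nat \<Rightarrow> nat" where
  "i_h h = nat \<lceil>log (3/2) (real h)\<rceil>"

definition h_i :: "nat \<Rightarrow> real" where
  "h_i i = (3/2) ^ i"

type_synonym dp_state = "nat set \<times> (nat \<Rightarrow> nat) \<times> (nat \<Rightarrow> nat \<Rightarrow> nat \<Rightarrow> nat list option)"

definition dp_step :: "nat set \<Rightarrow> (nat \<times> nat) set \<Rightarrow> (nat \<times> nat \<Rightarrow> real) \<Rightarrow> nat \<Rightarrow>
    nat \<times> nat \<Rightarrow> dp_state \<Rightarrow> dp_state \<Rightarrow> bool" where
  "dp_step V E w \<tau> si st st' \<longleftrightarrow>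
    (case si of (s, i) \<Rightarrow> case st of (C, cong, \<Pi>) \<Rightarrow> case st' of (C', cong', \<Pi>') \<Rightarrow>
     (\<exists>\<pi> :: nat \<Rightarrow> nat list option.
        (\<forall>t. t \<notin> V \<longrightarrow> \<pi> t = None) \<and>
        (\<forall>t\<in>V. case \<pi> t of
            None \<Rightarrow> hop_dist E w (V - C) (h_i i) s t = \<infinity>
          | Some p \<Rightarrow> is_walk E (V - C) p s t \<and> real (hops p) \<le> h_i i \<and>
                      ereal (walk_weight w p) = hop_dist E w (V - C) (h_i i) s t) \<and>
        \<Pi>' = \<Pi>(s := (\<Pi> s)(i := \<pi>)) \<and>
        cong' = (\<lambda>v. cong v + (\<Sum>t\<in>V. if v \<in> opt_vertices (\<pi> t)
                                       then nat \<lceil>real (card V) / h_i i\<rceil> else 0)) \<and>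
        C' = {v \<in> V. real (cong' v) > real \<tau> / 2}))"

inductive dp_run :: "nat set \<Rightarrow> (nat \<times> nat) set \<Rightarrow> (nat \<times> nat \<Rightarrow> real) \<Rightarrow> nat \<Rightarrow>
    (nat \<times> nat) list \<Rightarrow> dp_state \<Rightarrow> dp_state \<Rightarrow> bool"
  for V E w \<tau> where
  dp_run_Nil: "dp_run V E w \<tau> [] st st"
| dp_run_Cons: "dp_step V E w \<tau> j st st' \<Longrightarrow> dp_run V E w \<tau> js st' st'' \<Longrightarrow>
                dp_run V E w \<tau> (j # js) st st''"

definition dp_jobs :: "nat list \<Rightarrow> nat \<Rightarrow> (nat \<times> nat) list" where
  "dp_jobs ss ih = concat (map (\<lambda>s. map (\<lambda>i. (s, i)) [0..<Suc ih]) ss)"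

text \<open>A possible final state of DetPreprocessing(G, \<tau>, h) (arbitrary root order,
  arbitrary choice among shortest hop-restricted paths).\<close>
definition det_preprocessing :: "nat set \<Rightarrow> (nat \<times> nat) set \<Rightarrow> (nat \<times> nat \<Rightarrow> real) \<Rightarrow>
    nat \<Rightarrow> nat \<Rightarrow> dp_state \<Rightarrow> bool" where
  "det_preprocessing V E w \<tau> h fin \<longleftrightarrow>
     (\<exists>ss. distinct ss \<and> set ss = V \<and>
        dp_run V E w \<tau> (dp_jobs ss (i_h h)) ({}, (\<lambda>_. 0), (\<lambda>_ _ _. None)) fin)"

end

theory Submission
  imports Defs
begin

(* Paths computed for a root are confined to V - C, and C is exactly the set of vertices of
   congestion above \<tau>/2. One step adds at most n \<lceil>n/h\<^sub>i\<rceil> \<le> n\<^sup>2 \<le> \<tau>/2 to a single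
   vertex, so a vertex outside C never exceeds \<tau> and a vertex inside C is never touched again.
   An h\<^sub>i-hop path has at most h\<^sub>i + 1 vertices, so one step adds at most
   n (h\<^sub>i + 1) \<lceil>n/h\<^sub>i\<rceil> \<le> 3n\<^sup>2 to the total congestion; over the n (i\<^sub>h + 1) steps this is
   O(n\<^sup>3 log h), and |C| \<le> 2 \<Sum> Congestion / \<tau> by Markov's inequality. Finally C only grows,
   so hop distances in G - C only increase and a path that was shortest when computed stays
   hop-improving. *)

lemma is_walk_mono: "is_walk E U p s t \<Longrightarrow> U \<subseteq> U' \<Longrightarrow> is_walk E U' p s t"
  by (auto simp: is_walk_def)

lemma hop_dist_antimono: "U' \<subseteq> U \<Longrightarrow> hop_dist E w U hb s t \<le> hop_dist E w U' hb s t"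
  unfolding hop_dist_def by (rule INF_superset_mono) (auto simp: is_walk_def)

lemma card_walk_vertices_le: "is_walk E U p s t \<Longrightarrow> card (set p) \<le> hops p + 1"
  using card_length[of p] by (auto simp: is_walk_def hops_def)

lemma nat_ceiling_div_le:
  assumes "1 \<le> h"
  shows "nat \<lceil>real n / h\<rceil> \<le> n"
proof -
  have "real n / h \<le> real n"
    using assms by (simp add: divide_le_eq mult_le_cancel_left1)
  then show ?thesis by linarith
qed

lemma nat_ceiling_div_mult_le:
  fixes n c :: nat and h :: real
  assumes "1 \<le> h" "c \<le> n" "real c \<le> h + 1"
  shows "nat \<lceil>real n / h\<rceil> * c \<le> 3 * n"
proof -
  have "real (nat \<lceil>real n / h\<rceil>) * real c \<le> (real n / h + 1) * real c"
    using assms(1) by (intro mult_right_mono) auto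
  also have "\<dots> = real n / h * real c + real c" by (simp add: algebra_simps)
  also have "real n / h * real c \<le> real n / h * (h + 1)"
    using assms(1,3) by (intro mult_left_mono) auto
  also have "\<dots> = real n + real n / h" using assms(1) by (simp add: field_simps)
  also have "real n / h \<le> real n"
    using assms(1) by (simp add: divide_le_eq mult_le_cancel_left1)
  finally have "real (nat \<lceil>real n / h\<rceil> * c) \<le> 3 * real n" using assms(2) by simp
  then show ?thesis by linarith
qed

lemma card_less_mult_le_sum:
  fixes f :: "'a \<Rightarrow> real"
  assumes "finite V" "\<And>v. v \<in> V \<Longrightarrow> 0 \<le> f v"
  shows "real (card {v\<in>V. a < f v}) * a \<le> (\<Sum>v\<in>V. f v)"
proof -
  have "real (card {v\<in>V. a < f v}) * a = (\<Sum>v\<in>{v\<in>V. a < f v}. a)" by simp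
  also have "\<dots> \<le> (\<Sum>v\<in>{v\<in>V. a < f v}. f v)" by (intro sum_mono) auto
  also have "\<dots> \<le> (\<Sum>v\<in>V. f v)" using assms by (intro sum_mono2) auto
  finally show ?thesis .
qed

lemma ln_three_halves_ge: "1/3 \<le> ln (3/2::real)"
proof -
  have "ln (2/3::real) \<le> 2/3 - 1" by (rule ln_le_minus_one) simp
  moreover have "ln (2/3::real) = - ln (3/2)" by (simp add: ln_div)
  ultimately show ?thesis by simp
qed

lemma i_h_le:
  assumes "0 < h"
  shows "real (i_h h) + 1 \<le> 3 * (1 + ln (real h))"
proof -
  have "0 \<le> log (3/2) (real h)" using assms by simp
  then have "real (i_h h) \<le> log (3/2) (real h) + 1"
    unfolding i_h_def by linarith
  also have "log (3/2) (real h) = ln (real h) / ln (3/2)" by (simp add: log_def)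
  also have "\<dots> \<le> 3 * ln (real h)"
  proof -
    have "ln (real h) * 1 \<le> ln (real h) * (3 * ln (3/2))"
      using ln_three_halves_ge assms by (intro mult_left_mono) auto
    then show ?thesis using ln_three_halves_ge by (simp add: divide_le_eq algebra_simps)
  qed
  finally show ?thesis by simp
qed

definition hop_shortest_paths ::
    "nat set \<Rightarrow> (nat \<times> nat) set \<Rightarrow> (nat \<times> nat \<Rightarrow> real) \<Rightarrow> nat set \<Rightarrow> real \<Rightarrow> nat \<Rightarrow>
     (nat \<Rightarrow> nat list option) \<Rightarrow> bool" where
  "hop_shortest_paths V E w U hb s \<pi> \<longleftrightarrow>
     (\<forall>t. t \<notin> V \<longrightarrow> \<pi> t = None) \<and>
     (\<forall>t\<in>V. case \<pi> t of
         None \<Rightarrow> hop_dist E w U hb s t = \<infinity>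
       | Some p \<Rightarrow> is_walk E U p s t \<and> real (hops p) \<le> hb \<and>
                   ereal (walk_weight w p) = hop_dist E w U hb s t)"

definition hop_improving ::
    "nat set \<Rightarrow> (nat \<times> nat) set \<Rightarrow> (nat \<times> nat \<Rightarrow> real) \<Rightarrow> nat set \<Rightarrow> real \<Rightarrow> nat \<Rightarrow>
     (nat \<Rightarrow> nat list option) \<Rightarrow> bool" where
  "hop_improving V E w U hb s \<pi> \<longleftrightarrow>
     (\<forall>t\<in>V. (case \<pi> t of None \<Rightarrow> True | Some p \<Rightarrow> is_walk E V p s t) \<and>
             opt_weight w (\<pi> t) \<le> hop_dist E w U hb s t)"

lemma hop_improving_antimono:
  "hop_improving V E w U hb s \<pi> \<Longrightarrow> U' \<subseteq> U \<Longrightarrow> hop_improving V E w U' hb s \<pi>"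
  unfolding hop_improving_def by (meson hop_dist_antimono order_trans)

lemma hop_shortest_paths_vertices:
  "hop_shortest_paths V E w U hb s \<pi> \<Longrightarrow> opt_vertices (\<pi> t) \<subseteq> U"
  unfolding hop_shortest_paths_def opt_vertices_def
  by (cases "t \<in> V"; cases "\<pi> t") (force simp: is_walk_def)+

lemma hop_shortest_paths_card_vertices:
  assumes "hop_shortest_paths V E w U hb s \<pi>" "0 \<le> hb"
  shows "real (card (opt_vertices (\<pi> t))) \<le> hb + 1"
proof (cases "\<pi> t")
  case (Some p)
  then have "t \<in> V"
    using assms(1) unfolding hop_shortest_paths_def by force
  then have "is_walk E U p s t" "real (hops p) \<le> hb"
    using assms(1) Some unfolding hop_shortest_paths_def by force+
  then show ?thesis
    using card_walk_vertices_le Some by (fastforce simp: opt_vertices_def)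
qed (use assms(2) in \<open>simp add: opt_vertices_def\<close>)

lemma hop_shortest_paths_improving:
  assumes "hop_shortest_paths V E w U hb s \<pi>" "U \<subseteq> V"
  shows "hop_improving V E w U hb s \<pi>"
  unfolding hop_improving_def
proof
  fix t assume "t \<in> V"
  then have "case \<pi> t of
         None \<Rightarrow> hop_dist E w U hb s t = \<infinity>
       | Some p \<Rightarrow> is_walk E U p s t \<and> ereal (walk_weight w p) = hop_dist E w U hb s t"
    using assms(1) unfolding hop_shortest_paths_def by (auto split: option.split)
  then show "(case \<pi> t of None \<Rightarrow> True | Some p \<Rightarrow> is_walk E V p s t) \<and>
             opt_weight w (\<pi> t) \<le> hop_dist E w U hb s t"
    by (cases "\<pi> t") (auto simp: opt_weight_def dest: is_walk_mono[OF _ assms(2)])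
qed

definition congested :: "nat set \<Rightarrow> nat \<Rightarrow> (nat \<Rightarrow> nat) \<Rightarrow> nat set" where
  "congested V \<tau> cong = {v \<in> V. real (cong v) > real \<tau> / 2}"

lemma congested_mono: "(\<And>v. f v \<le> g v) \<Longrightarrow> congested V \<tau> f \<subseteq> congested V \<tau> g"
  unfolding congested_def by (auto intro: less_le_trans)

definition path_load :: "nat set \<Rightarrow> nat \<Rightarrow> (nat \<Rightarrow> nat list option) \<Rightarrow> nat \<Rightarrow> nat" where
  "path_load V k \<pi> v = (\<Sum>t\<in>V. if v \<in> opt_vertices (\<pi> t) then k else 0)"

lemma path_load_le: "path_load V k \<pi> v \<le> card V * k"
  unfolding path_load_def using sum_bounded_above[of V "\<lambda>t. if v \<in> opt_vertices (\<pi> t) then k else 0" k]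
  by (simp add: mult.commute)

lemma path_load_unused: "(\<And>t. v \<notin> opt_vertices (\<pi> t)) \<Longrightarrow> path_load V k \<pi> v = 0"
  by (simp add: path_load_def)

lemma sum_path_load:
  assumes "finite V" "\<And>t. opt_vertices (\<pi> t) \<subseteq> V"
  shows "(\<Sum>v\<in>V. path_load V k \<pi> v) = (\<Sum>t\<in>V. card (opt_vertices (\<pi> t)) * k)"
proof -
  have "(\<Sum>v\<in>V. path_load V k \<pi> v) = (\<Sum>t\<in>V. \<Sum>v\<in>V. if v \<in> opt_vertices (\<pi> t) then k else 0)"
    unfolding path_load_def by (rule sum.swap)
  also have "\<dots> = (\<Sum>t\<in>V. card (opt_vertices (\<pi> t)) * k)"
    using assms by (intro sum.cong) (simp_all add: sum.If_cases Int_absorb1)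
  finally show ?thesis .
qed

lemma h_i_ge_one: "1 \<le> h_i i"
  by (simp add: h_i_def)

lemma dp_stepE:
  assumes "dp_step V E w \<tau> j st st'"
  obtains s i C cong \<Pi> \<pi> k where "j = (s, i)" "st = (C, cong, \<Pi>)"
    "hop_shortest_paths V E w (V - C) (h_i i) s \<pi>" "k = nat \<lceil>real (card V) / h_i i\<rceil>"
    "st' = (congested V \<tau> (\<lambda>v. cong v + path_load V k \<pi> v),
            \<lambda>v. cong v + path_load V k \<pi> v, \<Pi>(s := (\<Pi> s)(i := \<pi>)))"
proof -
  obtain s i C cong \<Pi> C' cong' \<Pi>' where "j = (s, i)" "st = (C, cong, \<Pi>)" "st' = (C', cong', \<Pi>')"
    by (metis prod_cases3 surj_pair)
  with assms that show ?thesis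
    unfolding dp_step_def hop_shortest_paths_def congested_def path_load_def by auto
qed

fun tracks_congestion :: "nat set \<Rightarrow> nat \<Rightarrow> dp_state \<Rightarrow> bool" where
  "tracks_congestion V \<tau> (C, cong, _) \<longleftrightarrow> C = congested V \<tau> cong"

fun congestion_le :: "nat set \<Rightarrow> nat \<Rightarrow> dp_state \<Rightarrow> bool" where
  "congestion_le V \<tau> (_, cong, _) \<longleftrightarrow> (\<forall>v\<in>V. cong v \<le> \<tau>)"

fun total_congestion :: "nat set \<Rightarrow> dp_state \<Rightarrow> nat" where
  "total_congestion V (_, cong, _) = (\<Sum>v\<in>V. cong v)"

fun paths_improving ::
    "nat set \<Rightarrow> (nat \<times> nat) set \<Rightarrow> (nat \<times> nat \<Rightarrow> real) \<Rightarrow> nat \<times> nat \<Rightarrow> dp_state \<Rightarrow> bool" where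
  "paths_improving V E w (s, i) (C, _, \<Pi>) \<longleftrightarrow> hop_improving V E w (V - C) (h_i i) s (\<Pi> s i)"

lemma dp_step_tracks_congestion: "dp_step V E w \<tau> j st st' \<Longrightarrow> tracks_congestion V \<tau> st'"
  by (elim dp_stepE) simp

lemma dp_step_congestion_le:
  assumes step: "dp_step V E w \<tau> j st st'" and "2 * (card V)^2 \<le> \<tau>"
    and "tracks_congestion V \<tau> st" "congestion_le V \<tau> st"
  shows "congestion_le V \<tau> st'"
  using step
proof (elim dp_stepE)
  fix s i C cong \<Pi> \<pi> k
  assume st: "st = (C, cong, \<Pi>)" and \<pi>: "hop_shortest_paths V E w (V - C) (h_i i) s \<pi>"
    and k: "k = nat \<lceil>real (card V) / h_i i\<rceil>"
    and st': "st' = (congested V \<tau> (\<lambda>v. cong v + path_load V k \<pi> v),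
                     \<lambda>v. cong v + path_load V k \<pi> v, \<Pi>(s := (\<Pi> s)(i := \<pi>)))"
  have "cong v + path_load V k \<pi> v \<le> \<tau>" if "v \<in> V" for v
  proof (cases "v \<in> C")
    case True
    then have "path_load V k \<pi> v = 0"
      using hop_shortest_paths_vertices[OF \<pi>] by (blast intro: path_load_unused)
    then show ?thesis using assms(4) st that by simp
  next
    case False
    then have "2 * cong v \<le> \<tau>" using assms(3) st that by (simp add: congested_def)
    moreover have "path_load V k \<pi> v \<le> card V * card V"
      using path_load_le[of V k \<pi> v] nat_ceiling_div_le[OF h_i_ge_one] k
      by (metis le_trans mult_le_mono2)
    ultimately show ?thesis using assms(2) by (simp add: power2_eq_square)
  qed
  then show "congestion_le V \<tau> st'" using st' by simp
qed

lemma dp_step_total_congestion: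
  assumes step: "dp_step V E w \<tau> j st st'" and "finite V"
  shows "total_congestion V st' \<le> total_congestion V st + 3 * card V ^ 2"
  using step
proof (elim dp_stepE)
  fix s i C cong \<Pi> \<pi> k
  assume st: "st = (C, cong, \<Pi>)" and \<pi>: "hop_shortest_paths V E w (V - C) (h_i i) s \<pi>"
    and k: "k = nat \<lceil>real (card V) / h_i i\<rceil>"
    and st': "st' = (congested V \<tau> (\<lambda>v. cong v + path_load V k \<pi> v),
                     \<lambda>v. cong v + path_load V k \<pi> v, \<Pi>(s := (\<Pi> s)(i := \<pi>)))"
  have vertices: "opt_vertices (\<pi> t) \<subseteq> V" for t
    using hop_shortest_paths_vertices[OF \<pi>] by blast
  have load: "card (opt_vertices (\<pi> t)) * k \<le> 3 * card V" for t
  proof -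
    have "card (opt_vertices (\<pi> t)) \<le> card V"
      using vertices assms(2) by (rule card_mono[rotated])
    moreover have "real (card (opt_vertices (\<pi> t))) \<le> h_i i + 1"
      using hop_shortest_paths_card_vertices[OF \<pi>] h_i_ge_one[of i] by simp
    ultimately show ?thesis
      using nat_ceiling_div_mult_le[OF h_i_ge_one] k by (simp add: mult.commute)
  qed
  have "total_congestion V st' = total_congestion V st + (\<Sum>v\<in>V. path_load V k \<pi> v)"
    using st st' by (simp add: sum.distrib)
  also have "(\<Sum>v\<in>V. path_load V k \<pi> v) = (\<Sum>t\<in>V. card (opt_vertices (\<pi> t)) * k)"
    using assms(2) vertices by (rule sum_path_load)
  also have "\<dots> \<le> (\<Sum>t\<in>V. 3 * card V)"
    using load by (rule sum_mono)
  finally show ?thesis by (simp add: power2_eq_square)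
qed

lemma dp_step_paths_improving:
  assumes step: "dp_step V E w \<tau> j st st'" and "tracks_congestion V \<tau> st"
    and "x = j \<or> paths_improving V E w x st"
  shows "paths_improving V E w x st'"
  using step
proof (elim dp_stepE)
  fix s i C cong \<Pi> \<pi> k
  assume j: "j = (s, i)" and st: "st = (C, cong, \<Pi>)"
    and \<pi>: "hop_shortest_paths V E w (V - C) (h_i i) s \<pi>"
    and st': "st' = (congested V \<tau> (\<lambda>v. cong v + path_load V k \<pi> v),
                     \<lambda>v. cong v + path_load V k \<pi> v, \<Pi>(s := (\<Pi> s)(i := \<pi>)))"
  obtain y z where x: "x = (y, z)" by fastforce
  have removed: "C \<subseteq> congested V \<tau> (\<lambda>v. cong v + path_load V k \<pi> v)"
    using assms(2) st by (simp add: congested_mono)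
  show "paths_improving V E w x st'"
  proof (cases "x = j")
    case True
    have "hop_improving V E w (V - C) (h_i i) s \<pi>"
      using hop_shortest_paths_improving[OF \<pi>] by blast
    then show ?thesis
      using True j st' removed by (auto elim: hop_improving_antimono)
  next
    case False
    then have "hop_improving V E w (V - C) (h_i z) y (\<Pi> y z)"
      using assms(3) x st by simp
    then show ?thesis
      using False x j st' removed by (auto elim: hop_improving_antimono)
  qed
qed

lemma dp_run_tracks_congestion:
  "dp_run V E w \<tau> js st st' \<Longrightarrow> tracks_congestion V \<tau> st \<Longrightarrow> tracks_congestion V \<tau> st'"
  by (induction rule: dp_run.induct) (auto dest: dp_step_tracks_congestion)

lemma dp_run_congestion_le:
  "dp_run V E w \<tau> js st st' \<Longrightarrow> 2 * (card V)^2 \<le> \<tau> \<Longrightarrow>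
   tracks_congestion V \<tau> st \<Longrightarrow> congestion_le V \<tau> st \<Longrightarrow> congestion_le V \<tau> st'"
  by (induction rule: dp_run.induct) (auto dest: dp_step_congestion_le dp_step_tracks_congestion)

lemma dp_run_total_congestion:
  "dp_run V E w \<tau> js st st' \<Longrightarrow> finite V \<Longrightarrow>
   total_congestion V st' \<le> total_congestion V st + 3 * card V ^ 2 * length js"
  by (induction rule: dp_run.induct) (fastforce dest: dp_step_total_congestion)+

lemma dp_run_preserves_paths_improving:
  "dp_run V E w \<tau> js st st' \<Longrightarrow> tracks_congestion V \<tau> st \<Longrightarrow>
   paths_improving V E w x st \<Longrightarrow> paths_improving V E w x st'"
  by (induction rule: dp_run.induct) (auto intro: dp_step_paths_improving dp_step_tracks_congestion)

lemma dp_run_paths_improving: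
  "dp_run V E w \<tau> js st st' \<Longrightarrow> tracks_congestion V \<tau> st \<Longrightarrow> x \<in> set js \<Longrightarrow>
   paths_improving V E w x st'"
proof (induction rule: dp_run.induct)
  case (dp_run_Cons j st st' js st'')
  then show ?case
    by (metis dp_run_preserves_paths_improving dp_step_paths_improving
        dp_step_tracks_congestion set_ConsD)
qed simp

lemma length_dp_jobs: "length (dp_jobs ss k) = length ss * Suc k"
  unfolding dp_jobs_def by (induction ss) auto

lemma mem_dp_jobs: "s \<in> set ss \<Longrightarrow> i \<le> k \<Longrightarrow> (s, i) \<in> set (dp_jobs ss k)"
  unfolding dp_jobs_def by (auto simp: image_iff less_Suc_eq_le)

lemma tracks_congestion_init: "tracks_congestion V \<tau> ({}, (\<lambda>_. 0), (\<lambda>_ _ _. None))"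
  by (simp add: congested_def)

lemma det_preprocessingE:
  assumes "det_preprocessing V E w \<tau> h fin"
  obtains ss where "length ss = card V" "set ss = V"
    "dp_run V E w \<tau> (dp_jobs ss (i_h h)) ({}, (\<lambda>_. 0), (\<lambda>_ _ _. None)) fin"
  using assms distinct_card unfolding det_preprocessing_def by force

lemma det_preprocessing_congestion:
  assumes "det_preprocessing V E w \<tau> h (C, cong, \<Pi>)" "2 * (card V)^2 \<le> \<tau>"
  shows "C = congested V \<tau> cong" "\<forall>v\<in>V. cong v \<le> \<tau>"
proof -
  obtain ss where run: "dp_run V E w \<tau> (dp_jobs ss (i_h h)) ({}, (\<lambda>_. 0), (\<lambda>_ _ _. None)) (C, cong, \<Pi>)"
    using assms(1) by (rule det_preprocessingE)
  show "C = congested V \<tau> cong"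
    using dp_run_tracks_congestion[OF run tracks_congestion_init] by simp
  show "\<forall>v\<in>V. cong v \<le> \<tau>"
    using dp_run_congestion_le[OF run assms(2) tracks_congestion_init] by simp
qed

lemma det_preprocessing_total_congestion:
  assumes "det_preprocessing V E w \<tau> h (C, cong, \<Pi>)" "finite V" "0 < h"
  shows "(\<Sum>v\<in>V. real (cong v)) \<le> 9 * real (card V) ^ 3 * (1 + ln (real h))"
  using assms(1)
proof (elim det_preprocessingE)
  fix ss
  assume "length ss = card V"
    and "dp_run V E w \<tau> (dp_jobs ss (i_h h)) ({}, (\<lambda>_. 0), (\<lambda>_ _ _. None)) (C, cong, \<Pi>)"
  then have "(\<Sum>v\<in>V. cong v) \<le> 3 * card V ^ 2 * (card V * Suc (i_h h))"
    using dp_run_total_congestion[OF _ assms(2)] by (fastforce simp: length_dp_jobs)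
  then have "real (\<Sum>v\<in>V. cong v) \<le> real (3 * card V ^ 2 * (card V * Suc (i_h h)))"
    by (simp only: of_nat_le_iff)
  then have "(\<Sum>v\<in>V. real (cong v)) \<le> 3 * real (card V) ^ 2 * (real (card V) * (real (i_h h) + 1))"
    by (simp add: algebra_simps)
  also have "\<dots> \<le> 3 * real (card V) ^ 2 * (real (card V) * (3 * (1 + ln (real h))))"
    using i_h_le[OF assms(3)] by (intro mult_left_mono) auto
  finally show ?thesis by (simp add: power2_eq_square power3_eq_cube algebra_simps)
qed

lemma det_preprocessing_paths_improving:
  assumes "det_preprocessing V E w \<tau> h (C, cong, \<Pi>)" "s \<in> V" "i \<le> i_h h"
  shows "hop_improving V E w (V - C) (h_i i) s (\<Pi> s i)"
proof -
  obtain ss where "set ss = V"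
    and run: "dp_run V E w \<tau> (dp_jobs ss (i_h h)) ({}, (\<lambda>_. 0), (\<lambda>_ _ _. None)) (C, cong, \<Pi>)"
    using assms(1) by (rule det_preprocessingE)
  then have "(s, i) \<in> set (dp_jobs ss (i_h h))"
    using mem_dp_jobs assms(2,3) by blast
  then have "paths_improving V E w (s, i) (C, cong, \<Pi>)"
    by (rule dp_run_paths_improving[OF run tracks_congestion_init])
  then show ?thesis by simp
qed

theorem lemma3p4:
  shows "\<exists>c::real. \<forall>(V::nat set) (E::(nat \<times> nat) set) (w::nat \<times> nat \<Rightarrow> real)
      (h::nat) (\<tau>::nat) (C::nat set) (cong::nat \<Rightarrow> nat) \<Pi>.
    finite V \<and> E \<subseteq> V \<times> V \<and> h > 0 \<and> \<tau> \<ge> 2 * (card V)^2 \<and>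
    det_preprocessing V E w \<tau> h (C, cong, \<Pi>) \<longrightarrow>
      (\<forall>v\<in>V. cong v \<le> \<tau>) \<and>
      (\<Sum>v\<in>V. real (cong v)) \<le> c * real (card V) ^ 3 * (1 + ln (real h)) \<and>
      real (card C) \<le> c * real (card V) ^ 3 * (1 + ln (real h)) / real \<tau> \<and>
      (\<forall>s\<in>V. \<forall>t\<in>V. \<forall>i \<le> i_h h.
         (case \<Pi> s i t of None \<Rightarrow> True | Some p \<Rightarrow> is_walk E V p s t) \<and>
         opt_weight w (\<Pi> s i t) \<le> hop_dist E w (V - C) (h_i i) s t)"
proof (rule exI[of _ 18], intro allI impI, elim conjE, intro conjI)
  fix V E w h \<tau> C cong \<Pi>
  assume fin: "finite V" and "0 < h" and \<tau>: "2 * (card V)^2 \<le> \<tau>"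
    and dp: "det_preprocessing V E w \<tau> h (C, cong, \<Pi>)"
  note congestion = det_preprocessing_congestion[OF dp \<tau>]
  note total = det_preprocessing_total_congestion[OF dp fin \<open>0 < h\<close>]
  have "0 \<le> real (card V) ^ 3 * (1 + ln (real h))" using \<open>0 < h\<close> by simp
  then show "(\<Sum>v\<in>V. real (cong v)) \<le> 18 * real (card V) ^ 3 * (1 + ln (real h))"
    using total by linarith
  show "\<forall>v\<in>V. cong v \<le> \<tau>" by (fact congestion(2))
  show "real (card C) \<le> 18 * real (card V) ^ 3 * (1 + ln (real h)) / real \<tau>"
  proof (cases "\<tau> = 0")
    case True
    then show ?thesis using \<tau> fin congestion(1) by (simp add: congested_def)
  next
    case False
    have "real (card C) * (real \<tau> / 2) \<le> (\<Sum>v\<in>V. real (cong v))"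
      unfolding congestion(1) congested_def by (rule card_less_mult_le_sum[OF fin]) simp
    then show ?thesis using total False by (simp add: le_divide_eq)
  qed
  show "\<forall>s\<in>V. \<forall>t\<in>V. \<forall>i \<le> i_h h.
         (case \<Pi> s i t of None \<Rightarrow> True | Some p \<Rightarrow> is_walk E V p s t) \<and>
         opt_weight w (\<Pi> s i t) \<le> hop_dist E w (V - C) (h_i i) s t"
    using det_preprocessing_paths_improving[OF dp] by (simp add: hop_improving_def)
qed

end
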